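(* Let $\mathbf V$ be a monoid variety and let $f:\Sigma^\ast\to\Sigma^\ast$ be a rational partial function such that $\mathrm{dom}(f)$ is a $\mathbf V$-language. Then $f$ is definable by an unambiguous $\mathbf V$-NFT if and only if its completion $\bar f$ is definable by an unambiguous $\mathbf V$-NFT.
   Context: The completion of $f$ is the total function $\bar f:\Sigma^\ast\to(\Sigma\uplus\{\bot\})^\ast$ with $\bar f(u)=f(u)$ if $u\in\mathrm{dom}(f)$ and $\bar f(u)=\bot$ otherwise ($\bot$ a fresh output letter). A (real-time) NFT is $T=(Q,I,F,\Delta,i,t)$ with partial $\Delta:Q\times\Sigma\times Q\to\Gamma^\ast$, $i:I\to\Gamma^\ast$, $t:F\to\Gamma^\ast$ ($\Gamma$ an output alphabet), relating $u$ to $i(q_0)wt(q_f)$ for each successful run $q_0\xrightarrow{u\mid w}q_f$; rational functions are those defined by NFTs. It is unambiguous if its underlying automaton (outputs forgotten) has at most one successful run on each word. The transition monoid of an automaton with states $Q$ is $\Sigma^\ast/\equiv$ where $u\equiv v$ iff for all $p,q$ there is a run $p\to q$ on $u$ iff on $v$; a $\mathbf V$-automaton ($\mathbf V$-NFT) is one whose (underlying automaton's) transition monoid is in $\mathbf V$; a $\mathbf V$-language is a language recognized by a $\mathbf V$-automaton. *)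

theory Defs
  imports "HOL-Algebra.Group"
begin

text \<open>Finite monoids are represented (up to isomorphism) with carrier a subset of nat.\<close>

definition monoid_variety :: "(nat monoid \<Rightarrow> bool) \<Rightarrow> bool" where
  "monoid_variety V \<longleftrightarrow>
     (\<forall>M. V M \<longrightarrow> monoid M \<and> finite (carrier M)) \<and>
     (\<exists>M. V M) \<and>
     (\<forall>M H. V M \<and> submonoid H M \<longrightarrow> V (M\<lparr>carrier := H\<rparr>)) \<and>
     (\<forall>M N h. V M \<and> monoid N \<and> h \<in> hom M N \<and> h \<one>\<^bsub>M\<^esub> = \<one>\<^bsub>N\<^esub>
              \<and> h ` carrier M = carrier N \<longrightarrow> V N) \<and>
     (\<forall>M N P. V M \<and> V N \<and> monoid P \<and> P \<cong> (M \<times>\<times> N) \<longrightarrow> V P)"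

record ('q, 'a) nfa =
  nfa_states :: "'q set"
  nfa_init :: "'q set"
  nfa_final :: "'q set"
  nfa_trans :: "'q \<Rightarrow> 'a \<Rightarrow> 'q \<Rightarrow> bool"

definition wf_nfa :: "('q, 'a) nfa \<Rightarrow> bool" where
  "wf_nfa A \<longleftrightarrow> finite (nfa_states A) \<and> nfa_init A \<subseteq> nfa_states A \<and>
     nfa_final A \<subseteq> nfa_states A \<and>
     (\<forall>p a q. nfa_trans A p a q \<longrightarrow> p \<in> nfa_states A \<and> q \<in> nfa_states A)"

fun is_path :: "('q, 'a) nfa \<Rightarrow> 'q list \<Rightarrow> 'a list \<Rightarrow> bool" where
  "is_path A [q] [] = (q \<in> nfa_states A)"
| "is_path A (p # q # qs) (a # u) = (p \<in> nfa_states A \<and> nfa_trans A p a q \<and> is_path A (q # qs) u)"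
| "is_path A _ _ = False"

definition successful_run :: "('q, 'a) nfa \<Rightarrow> 'q list \<Rightarrow> 'a list \<Rightarrow> bool" where
  "successful_run A qs u \<longleftrightarrow> is_path A qs u \<and> hd qs \<in> nfa_init A \<and> last qs \<in> nfa_final A"

definition nfa_lang :: "('q, 'a) nfa \<Rightarrow> 'a list set" where
  "nfa_lang A = {u. \<exists>qs. successful_run A qs u}"

definition unambiguous_nfa :: "('q, 'a) nfa \<Rightarrow> bool" where
  "unambiguous_nfa A \<longleftrightarrow> (\<forall>u qs qs'. successful_run A qs u \<and> successful_run A qs' u \<longrightarrow> qs = qs')"

text \<open>Transition monoid: the class of u under \<equiv> is represented by the relation
{(p,q). there is a run p \<rightarrow> q on u}; multiplication is relational composition.\<close>
definition trans_rel :: "('q, 'a) nfa \<Rightarrow> 'a list \<Rightarrow> ('q \<times> 'q) set" where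
  "trans_rel A u = {(p, q). \<exists>qs. is_path A qs u \<and> hd qs = p \<and> last qs = q}"

definition transition_monoid :: "('q, 'a) nfa \<Rightarrow> ('q \<times> 'q) set monoid" where
  "transition_monoid A = \<lparr>carrier = range (trans_rel A), mult = (\<lambda>R S. R O S),
      one = trans_rel A []\<rparr>"

definition V_automaton :: "(nat monoid \<Rightarrow> bool) \<Rightarrow> ('q, 'a) nfa \<Rightarrow> bool" where
  "V_automaton V A \<longleftrightarrow> (\<exists>M. V M \<and> M \<cong> transition_monoid A)"

definition V_language :: "(nat monoid \<Rightarrow> bool) \<Rightarrow> 'a list set \<Rightarrow> bool" where
  "V_language V L \<longleftrightarrow> (\<exists>A :: (nat, 'a) nfa. wf_nfa A \<and> V_automaton V A \<and> nfa_lang A = L)"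

record ('q, 'a, 'g) nft =
  nft_states :: "'q set"
  nft_init :: "'q \<Rightarrow> 'g list option"   \<comment> \<open>I = dom, output i\<close>
  nft_final :: "'q \<Rightarrow> 'g list option"  \<comment> \<open>F = dom, output t\<close>
  nft_delta :: "'q \<Rightarrow> 'a \<Rightarrow> 'q \<Rightarrow> 'g list option"

definition underlying :: "('q, 'a, 'g) nft \<Rightarrow> ('q, 'a) nfa" where
  "underlying T = \<lparr>nfa_states = nft_states T, nfa_init = dom (nft_init T),
     nfa_final = dom (nft_final T), nfa_trans = (\<lambda>p a q. nft_delta T p a q \<noteq> None)\<rparr>"

definition wf_nft :: "('q, 'a, 'g) nft \<Rightarrow> bool" where
  "wf_nft T \<longleftrightarrow> wf_nfa (underlying T)"

fun run_output :: "('q, 'a, 'g) nft \<Rightarrow> 'q list \<Rightarrow> 'a list \<Rightarrow> 'g list" where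
  "run_output T (p # q # qs) (a # u) = the (nft_delta T p a q) @ run_output T (q # qs) u"
| "run_output T _ _ = []"

definition nft_rel :: "('q, 'a, 'g) nft \<Rightarrow> ('a list \<times> 'g list) set" where
  "nft_rel T = {(u, w). \<exists>qs. successful_run (underlying T) qs u \<and>
      w = the (nft_init T (hd qs)) @ run_output T qs u @ the (nft_final T (last qs))}"

definition unambiguous_nft :: "('q, 'a, 'g) nft \<Rightarrow> bool" where
  "unambiguous_nft T \<longleftrightarrow> unambiguous_nfa (underlying T)"

definition V_nft :: "(nat monoid \<Rightarrow> bool) \<Rightarrow> ('q, 'a, 'g) nft \<Rightarrow> bool" where
  "V_nft V T \<longleftrightarrow> V_automaton V (underlying T)"

definition nft_defines :: "('q, 'a, 'g) nft \<Rightarrow> ('a list \<Rightarrow> 'g list option) \<Rightarrow> bool" where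
  "nft_defines T f \<longleftrightarrow> nft_rel T = {(u, w). f u = Some w}"

definition rational :: "('a list \<Rightarrow> 'g list option) \<Rightarrow> bool" where
  "rational f \<longleftrightarrow> (\<exists>T :: (nat, 'a, 'g) nft. wf_nft T \<and> nft_defines T f)"

text \<open>Completion: output alphabet \<Sigma> \<uplus> {\<bottom>} is 'a option, with \<bottom> = None.\<close>
definition completion :: "('a list \<Rightarrow> 'a list option) \<Rightarrow> 'a list \<Rightarrow> 'a option list option" where
  "completion f u = (case f u of Some w \<Rightarrow> Some (map Some w) | None \<Rightarrow> Some [None])"

end

theory Submission
  imports Defs "HOL-Library.Nat_Bijection"
begin

text \<open>Let D b be the deterministic automaton obtained by the subset construction from a
  V-automaton for dom f, accepting dom f if b holds and its complement otherwise. If T defines f,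
  the disjoint union of T, with outputs tagged by Some, and D False, emitting \<bottom>, defines the
  completion; it is unambiguous because its two parts have disjoint domains. If T defines the
  completion, the product of T with D True, with outputs untagged, defines f. All these automata
  stay in V: the transition relation of a word in the new automaton is determined by its
  transition relations in the components, so the new transition monoid divides the product of
  the old ones.\<close>

section \<open>Runs and the transition monoid\<close>

lemma is_path_length: "is_path A qs u \<Longrightarrow> length qs = Suc (length u)"
  by (induction A qs u rule: is_path.induct) auto

lemma is_path_not_Nil: "is_path A qs u \<Longrightarrow> qs \<noteq> []"
  using is_path_length by fastforce

lemma is_path_states: "is_path A qs u \<Longrightarrow> set qs \<subseteq> nfa_states A"
  by (induction A qs u rule: is_path.induct) auto

lemma is_path_Nil_iff: "is_path A qs [] \<longleftrightarrow> (\<exists>q. qs = [q] \<and> q \<in> nfa_states A)"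
  by (cases qs rule: remdups_adj.cases) auto

lemma is_path_Cons_iff: "is_path A qs (a # u) \<longleftrightarrow>
   (\<exists>p q rs. qs = p # q # rs \<and> p \<in> nfa_states A \<and> nfa_trans A p a q \<and> is_path A (q # rs) u)"
  by (cases qs rule: remdups_adj.cases) auto

lemma is_path_append:
  "is_path A qs u \<Longrightarrow> is_path A (last qs # rs) v \<Longrightarrow> is_path A (qs @ rs) (u @ v)"
  by (induction A qs u rule: is_path.induct) auto

lemma is_path_appendE:
  assumes "is_path A qs (u @ v)"
  obtains ps rs where "qs = ps @ rs" "is_path A ps u" "is_path A (last ps # rs) v"
  using assms
proof (induction u arbitrary: qs thesis)
  case Nil
  then obtain q rs where "qs = q # rs" "q \<in> nfa_states A"
    using is_path_states[OF Nil.prems(2)] by (cases qs) auto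
  with Nil show ?case by (intro Nil.prems(1)[of "[q]" rs]) (auto simp: is_path_Nil_iff)
next
  case (Cons a u)
  then obtain p q rs where qs: "qs = p # q # rs" "p \<in> nfa_states A" "nfa_trans A p a q"
    "is_path A (q # rs) (u @ v)" by (auto simp: is_path_Cons_iff)
  obtain ps rs' where ps: "q # rs = ps @ rs'" "is_path A ps u" "is_path A (last ps # rs') v"
    using Cons.IH[OF _ qs(4)] by blast
  then obtain ps' where "ps = q # ps'"
    using is_path_not_Nil by (cases ps) fastforce+
  with qs ps show ?case by (intro Cons.prems(1)[of "p # ps" rs']) auto
qed

lemma trans_rel_iff:
  "(p, q) \<in> trans_rel A u \<longleftrightarrow> (\<exists>qs. is_path A qs u \<and> hd qs = p \<and> last qs = q)"
  by (simp add: trans_rel_def)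

lemma trans_rel_subset: "trans_rel A u \<subseteq> nfa_states A \<times> nfa_states A"
  using is_path_states is_path_not_Nil by (fastforce simp: trans_rel_def)

lemma trans_rel_Nil: "trans_rel A [] = Id_on (nfa_states A)"
  by (auto simp: trans_rel_def is_path_Nil_iff)

lemma trans_rel_append: "trans_rel A (u @ v) = trans_rel A u O trans_rel A v"
proof (intro equalityI subsetI)
  fix x assume "x \<in> trans_rel A (u @ v)"
  then obtain qs where qs: "is_path A qs (u @ v)" "x = (hd qs, last qs)"
    by (auto simp: trans_rel_def)
  obtain ps rs where "qs = ps @ rs" "is_path A ps u" "is_path A (last ps # rs) v"
    using qs(1) by (rule is_path_appendE)
  with qs show "x \<in> trans_rel A u O trans_rel A v"
    using is_path_not_Nil unfolding trans_rel_def
    by (fastforce simp: last_append intro!: relcompI)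
next
  fix x assume "x \<in> trans_rel A u O trans_rel A v"
  then obtain ps rs where ps: "is_path A ps u" "is_path A rs v" "last ps = hd rs"
    and x: "x = (hd ps, last rs)" by (auto simp: trans_rel_def)
  then obtain r rs' where rs: "rs = r # rs'"
    using is_path_not_Nil by (cases rs) auto
  with ps have "is_path A (ps @ rs') (u @ v)" by (intro is_path_append) simp_all
  with ps x rs show "x \<in> trans_rel A (u @ v)"
    using is_path_not_Nil[OF ps(1)] unfolding trans_rel_def
    by (intro CollectI) (cases rs', auto simp: last_append)
qed

lemma successful_run_iff_Cons:
  "successful_run A qs u \<longleftrightarrow> (\<exists>q qs'. qs = q # qs' \<and> is_path A qs u \<and> q \<in> nfa_init A \<and> last qs \<in> nfa_final A)"
  by (cases qs) (auto simp: successful_run_def)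


lemma trans_rel_eq_endpoints: "trans_rel A u = (\<lambda>qs. (hd qs, last qs)) ` {qs. is_path A qs u}"
  by (auto simp: trans_rel_def)


lemma endpoints_map_image:
  assumes "\<forall>ps \<in> P. ps \<noteq> []"
  shows "(\<lambda>qs. (hd qs, last qs)) ` map f ` P = map_prod f f ` (\<lambda>qs. (hd qs, last qs)) ` P"
  unfolding image_image using assms by (intro image_cong) (auto simp: hd_map last_map)


lemma nfa_lang_iff_trans_rel:
  "u \<in> nfa_lang A \<longleftrightarrow> trans_rel A u `` nfa_init A \<inter> nfa_final A \<noteq> {}"
  unfolding nfa_lang_def successful_run_def trans_rel_def by blast

lemma monoid_transition_monoid: "monoid (transition_monoid A)"
proof -
  have "trans_rel A [] O R = R" "R O trans_rel A [] = R" if "R \<in> range (trans_rel A)" for R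
    using that by (metis rangeE append_Nil append_Nil2 trans_rel_append)+
  then show ?thesis
    unfolding transition_monoid_def
    by unfold_locales (auto simp: O_assoc simp flip: trans_rel_append)
qed

lemma finite_carrier_transition_monoid:
  "finite (nfa_states A) \<Longrightarrow> finite (carrier (transition_monoid A))"
  unfolding transition_monoid_def
  by (rule finite_subset[of _ "Pow (nfa_states A \<times> nfa_states A)"]) (auto dest: subsetD[OF trans_rel_subset])

section \<open>Monoid varieties and word homomorphisms\<close>

lemma monoid_iso_inv:
  assumes "monoid G" "h \<in> iso G H"
  shows "inv_into (carrier G) h \<in> iso H G"
proof -
  interpret G: monoid G by fact
  have h: "h \<in> hom G H" "bij_betw h (carrier G) (carrier H)"
    using assms(2) by (auto simp: iso_def)
  then have inv: "bij_betw (inv_into (carrier G) h) (carrier H) (carrier G)"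
    by (simp add: bij_betw_inv_into)
  then have into: "inv_into (carrier G) h x \<in> carrier G" if "x \<in> carrier H" for x
    using that by (meson bij_betwE)
  have "inv_into (carrier G) h \<in> hom H G"
  proof (rule homI)
    fix x y assume xy: "x \<in> carrier H" "y \<in> carrier H"
    show "inv_into (carrier G) h (x \<otimes>\<^bsub>H\<^esub> y) = inv_into (carrier G) h x \<otimes>\<^bsub>G\<^esub> inv_into (carrier G) h y"
      using h xy into bij_betw_inv_into_right[OF h(2)]
      by (intro inv_into_f_eq) (auto simp: bij_betw_def hom_def)
  qed (rule into)
  with inv show ?thesis by (simp add: iso_def)
qed

lemma monoid_iso_one:
  assumes "monoid G" "monoid H" "h \<in> iso G H"
  shows "h \<one>\<^bsub>G\<^esub> = \<one>\<^bsub>H\<^esub>"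
proof -
  interpret G: monoid G by fact
  interpret H: monoid H by fact
  have h: "h \<in> hom G H" "h ` carrier G = carrier H" using assms(3) by (auto simp: iso_iff)
  then obtain x where x: "x \<in> carrier G" "h x = \<one>\<^bsub>H\<^esub>"
    using H.one_closed by (metis imageE)
  have "h \<one>\<^bsub>G\<^esub> = h \<one>\<^bsub>G\<^esub> \<otimes>\<^bsub>H\<^esub> \<one>\<^bsub>H\<^esub>"
    using hom_in_carrier[OF h(1) G.one_closed] by simp
  also have "\<dots> = h (\<one>\<^bsub>G\<^esub> \<otimes>\<^bsub>G\<^esub> x)"
    using x h(1) by (simp only: hom_mult[OF h(1) G.one_closed x(1)])
  also have "\<dots> = \<one>\<^bsub>H\<^esub>"
    using x by simp
  finally show ?thesis .
qed

text \<open>Varieties only contain monoids with carrier in nat, so the monoids built below are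
  transported into nat along an injection.\<close>

definition nat_copy :: "('b, 'c) monoid_scheme \<Rightarrow> ('b \<Rightarrow> nat) \<Rightarrow> nat monoid" where
  "nat_copy G e = \<lparr>carrier = e ` carrier G,
     mult = (\<lambda>x y. e (inv_into (carrier G) e x \<otimes>\<^bsub>G\<^esub> inv_into (carrier G) e y)),
     one = e \<one>\<^bsub>G\<^esub>\<rparr>"

lemma monoid_nat_copy:
  assumes "monoid G" "inj_on e (carrier G)"
  shows "monoid (nat_copy G e)"
proof -
  interpret G: monoid G by fact
  show ?thesis
    using assms(2) unfolding nat_copy_def
    by unfold_locales (auto simp: G.m_assoc)
qed

lemma nat_copy_iso:
  assumes "monoid G" "inj_on e (carrier G)"
  shows "e \<in> iso G (nat_copy G e)"
proof -
  interpret G: monoid G by fact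
  have "e \<in> hom G (nat_copy G e)"
    using assms(2) by (intro homI) (simp_all add: nat_copy_def)
  with assms(2) show ?thesis by (simp add: iso_iff nat_copy_def)
qed

lemma nat_copy_is_iso:
  assumes "monoid G" "inj_on e (carrier G)"
  shows "nat_copy G e \<cong> G"
  using monoid_iso_inv[OF assms(1) nat_copy_iso[OF assms]] by (rule is_isoI)

definition word_hom :: "('b, 'c) monoid_scheme \<Rightarrow> ('a list \<Rightarrow> 'b) \<Rightarrow> bool" where
  "word_hom M \<phi> \<longleftrightarrow> (\<forall>u. \<phi> u \<in> carrier M) \<and> \<phi> [] = \<one>\<^bsub>M\<^esub> \<and>
     (\<forall>u v. \<phi> (u @ v) = \<phi> u \<otimes>\<^bsub>M\<^esub> \<phi> v)"

lemma word_hom_trans_rel: "word_hom (transition_monoid A) (trans_rel A)"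
  by (simp add: word_hom_def transition_monoid_def trans_rel_append)

lemma word_hom_comp:
  "word_hom M \<phi> \<Longrightarrow> h \<in> hom M N \<Longrightarrow> h \<one>\<^bsub>M\<^esub> = \<one>\<^bsub>N\<^esub> \<Longrightarrow> word_hom N (h \<circ> \<phi>)"
  by (simp add: word_hom_def hom_def Pi_iff)

lemma word_hom_DirProd:
  "word_hom M \<phi> \<Longrightarrow> word_hom N \<psi> \<Longrightarrow> word_hom (M \<times>\<times> N) (\<lambda>u. (\<phi> u, \<psi> u))"
  by (simp add: word_hom_def DirProd_def)

lemma monoid_varietyD:
  assumes "monoid_variety V"
  shows monoid_variety_monoid: "V M \<Longrightarrow> monoid M"
    and monoid_variety_submonoid: "V M \<Longrightarrow> submonoid H M \<Longrightarrow> V (M\<lparr>carrier := H\<rparr>)"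
    and monoid_variety_hom_image: "V M \<Longrightarrow> monoid N \<Longrightarrow> h \<in> hom M N \<Longrightarrow> h \<one>\<^bsub>M\<^esub> = \<one>\<^bsub>N\<^esub>
      \<Longrightarrow> h ` carrier M = carrier N \<Longrightarrow> V N"
    and monoid_variety_DirProd: "V M \<Longrightarrow> V N \<Longrightarrow> monoid P \<Longrightarrow> P \<cong> M \<times>\<times> N \<Longrightarrow> V P"
  using assms unfolding monoid_variety_def by blast+

text \<open>Closure under division: the monoid generated by the image of a word homomorphism lies in V
  once the homomorphism factors through a word homomorphism into a member of V.\<close>

lemma monoid_variety_word_hom_quotient:
  assumes V: "monoid_variety V" and M: "V M" "word_hom M \<phi>"
    and N: "monoid N" "word_hom N \<psi>" "range \<psi> = carrier N"
    and factors: "\<And>u v. \<phi> u = \<phi> v \<Longrightarrow> \<psi> u = \<psi> v"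
  shows "V N"
proof -
  define Q where "Q = M\<lparr>carrier := range \<phi>\<rparr>"
  have "submonoid (range \<phi>) M"
  proof
    show "range \<phi> \<subseteq> carrier M"
      using M(2) by (auto simp: word_hom_def)
    show "\<one>\<^bsub>M\<^esub> \<in> range \<phi>"
      using M(2) rangeI[of \<phi> "[]"] by (simp add: word_hom_def)
    fix x y assume "x \<in> range \<phi>" "y \<in> range \<phi>"
    then obtain u v where "x = \<phi> u" "y = \<phi> v" by blast
    then show "x \<otimes>\<^bsub>M\<^esub> y \<in> range \<phi>"
      using M(2) rangeI[of \<phi> "u @ v"] by (simp add: word_hom_def)
  qed
  then have "V Q"
    unfolding Q_def by (rule monoid_variety_submonoid[OF V M(1)])
  define h where "h x = \<psi> (inv_into UNIV \<phi> x)" for x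
  have h: "h (\<phi> u) = \<psi> u" for u
    unfolding h_def by (rule factors) (simp add: f_inv_into_f)
  have "h \<in> hom Q N"
  proof (rule homI)
    fix x y assume "x \<in> carrier Q" "y \<in> carrier Q"
    then obtain u v where uv: "x = \<phi> u" "y = \<phi> v" by (auto simp: Q_def)
    have "h (\<phi> u \<otimes>\<^bsub>M\<^esub> \<phi> v) = h (\<phi> (u @ v))"
      using M(2) by (simp add: word_hom_def)
    also have "\<dots> = h (\<phi> u) \<otimes>\<^bsub>N\<^esub> h (\<phi> v)"
      using N(2) by (simp add: word_hom_def h)
    finally show "h (x \<otimes>\<^bsub>Q\<^esub> y) = h x \<otimes>\<^bsub>N\<^esub> h y"
      by (simp add: uv Q_def)
  qed (use N(2) in \<open>auto simp: Q_def word_hom_def h\<close>)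
  moreover have "h \<one>\<^bsub>Q\<^esub> = \<one>\<^bsub>N\<^esub>"
    using M(2) N(2) h[of "[]"] by (simp add: Q_def word_hom_def)
  moreover have "h ` carrier Q = carrier N"
    by (simp add: Q_def image_image h N(3)[symmetric])
  ultimately show ?thesis
    by (rule monoid_variety_hom_image[OF V \<open>V Q\<close> N(1)])
qed

lemma V_automaton_imp_word_hom:
  assumes V: "monoid_variety V" and A: "V_automaton V A"
  obtains M :: "nat monoid" and \<phi> where "V M" "word_hom M \<phi>"
    "\<And>u v. \<phi> u = \<phi> v \<Longrightarrow> trans_rel A u = trans_rel A v"
proof -
  obtain M h where M: "V M" "h \<in> iso M (transition_monoid A)"
    using A unfolding V_automaton_def is_iso_def by blast
  have "monoid M" by (rule monoid_variety_monoid[OF V M(1)])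
  define g where "g = inv_into (carrier M) h"
  have g: "g \<in> iso (transition_monoid A) M"
    unfolding g_def by (rule monoid_iso_inv[OF \<open>monoid M\<close> M(2)])
  have wh: "word_hom M (g \<circ> trans_rel A)"
    using word_hom_trans_rel iso_imp_homomorphism[OF g]
      monoid_iso_one[OF monoid_transition_monoid \<open>monoid M\<close> g]
    by (rule word_hom_comp)
  have inj: "trans_rel A u = trans_rel A v" if "g (trans_rel A u) = g (trans_rel A v)" for u v
    using g that by (auto simp: iso_iff transition_monoid_def dest: inj_onD)
  show thesis
    by (rule that[OF M(1) wh]) (rule inj, simp)
qed

lemma monoid_variety_word_hom_pair:
  assumes V: "monoid_variety V" and "V M1" "word_hom M1 \<phi>1" "V M2" "word_hom M2 \<phi>2"
  obtains M :: "nat monoid" and \<phi> where "V M" "word_hom M \<phi>"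
    "\<And>u v. \<phi> u = \<phi> v \<Longrightarrow> \<phi>1 u = \<phi>1 v \<and> \<phi>2 u = \<phi>2 v"
proof -
  define D where "D = M1 \<times>\<times> M2"
  have D: "monoid D" "inj_on prod_encode (carrier D)"
    unfolding D_def using assms monoid_variety_monoid[OF V]
    by (auto intro: DirProd_monoid inj_prod_encode)
  have "V (nat_copy D prod_encode)"
    using assms(2,4) monoid_nat_copy[OF D] nat_copy_is_iso[OF D] unfolding D_def
    by (rule monoid_variety_DirProd[OF V])
  moreover have "word_hom (nat_copy D prod_encode) (prod_encode \<circ> (\<lambda>u. (\<phi>1 u, \<phi>2 u)))"
    using word_hom_DirProd[OF assms(3,5)] iso_imp_homomorphism[OF nat_copy_iso[OF D]]
    unfolding D_def by (rule word_hom_comp) (simp add: nat_copy_def)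
  ultimately show thesis
    by (rule that) simp
qed

lemma V_automaton_if_word_hom:
  assumes V: "monoid_variety V" and M: "V M" "word_hom M \<phi>"
    and B: "finite (nfa_states B)" and factors: "\<And>u v. \<phi> u = \<phi> v \<Longrightarrow> trans_rel B u = trans_rel B v"
  shows "V_automaton V B"
proof -
  define T where "T = transition_monoid B"
  obtain e :: "_ \<Rightarrow> nat" where e: "inj_on e (carrier T)"
    using finite_imp_inj_to_nat_seg[OF finite_carrier_transition_monoid[OF B]] unfolding T_def by blast
  have T: "monoid T" unfolding T_def by (rule monoid_transition_monoid)
  have "V (nat_copy T e)"
  proof (rule monoid_variety_word_hom_quotient[OF V M monoid_nat_copy[OF T e]])
    show "word_hom (nat_copy T e) (e \<circ> trans_rel B)"
      using word_hom_trans_rel iso_imp_homomorphism[OF nat_copy_iso[OF T e]]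
      unfolding T_def by (rule word_hom_comp) (simp add: nat_copy_def)
    show "range (e \<circ> trans_rel B) = carrier (nat_copy T e)"
      by (simp add: nat_copy_def T_def transition_monoid_def image_comp)
  next
    fix u v assume "\<phi> u = \<phi> v"
    then have "trans_rel B u = trans_rel B v" by (rule factors)
    then show "(e \<circ> trans_rel B) u = (e \<circ> trans_rel B) v" by simp
  qed
  with nat_copy_is_iso[OF T e] show ?thesis
    unfolding V_automaton_def T_def by blast
qed

lemma V_automaton_if_trans_rel_determined:
  fixes A1 :: "('q1, 'a) nfa" and A2 :: "('q2, 'a) nfa" and B :: "('q, 'a) nfa"
  assumes V: "monoid_variety V" and "V_automaton V A1" "V_automaton V A2"
    and "finite (nfa_states B)"
    and determined: "\<And>u v. trans_rel A1 u = trans_rel A1 v \<Longrightarrow> trans_rel A2 u = trans_rel A2 v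
      \<Longrightarrow> trans_rel B u = trans_rel B v"
  shows "V_automaton V B"
proof -
  obtain M1 and \<phi>1 :: "'a list \<Rightarrow> nat" where M1: "V M1" "word_hom M1 \<phi>1"
    and \<phi>1: "\<And>u v. \<phi>1 u = \<phi>1 v \<Longrightarrow> trans_rel A1 u = trans_rel A1 v"
    using V_automaton_imp_word_hom[OF V assms(2)] by blast
  obtain M2 and \<phi>2 :: "'a list \<Rightarrow> nat" where M2: "V M2" "word_hom M2 \<phi>2"
    and \<phi>2: "\<And>u v. \<phi>2 u = \<phi>2 v \<Longrightarrow> trans_rel A2 u = trans_rel A2 v"
    using V_automaton_imp_word_hom[OF V assms(3)] by blast
  obtain M and \<phi> :: "'a list \<Rightarrow> nat" where M: "V M" "word_hom M \<phi>"
    and \<phi>: "\<And>u v. \<phi> u = \<phi> v \<Longrightarrow> \<phi>1 u = \<phi>1 v \<and> \<phi>2 u = \<phi>2 v"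
    using monoid_variety_word_hom_pair[OF V M1 M2] by blast
  show ?thesis
  proof (rule V_automaton_if_word_hom[OF V M assms(4)])
    fix u v assume "\<phi> u = \<phi> v"
    then have "\<phi>1 u = \<phi>1 v" "\<phi>2 u = \<phi>2 v" using \<phi> by blast+
    then show "trans_rel B u = trans_rel B v" by (intro determined \<phi>1 \<phi>2)
  qed
qed

section \<open>Deterministic automata and the subset construction\<close>

definition dfa :: "'q set \<Rightarrow> 'q \<Rightarrow> 'q set \<Rightarrow> ('q \<Rightarrow> 'a \<Rightarrow> 'q) \<Rightarrow> ('q, 'a) nfa" where
  "dfa Q i F \<delta> = \<lparr>nfa_states = Q, nfa_init = {i}, nfa_final = F,
     nfa_trans = (\<lambda>p a q. p \<in> Q \<and> q = \<delta> p a)\<rparr>"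

lemma dfa_simps [simp]:
  "nfa_states (dfa Q i F \<delta>) = Q" "nfa_init (dfa Q i F \<delta>) = {i}" "nfa_final (dfa Q i F \<delta>) = F"
  "nfa_trans (dfa Q i F \<delta>) p a q \<longleftrightarrow> p \<in> Q \<and> q = \<delta> p a"
  by (simp_all add: dfa_def)

fun dfa_run :: "('q \<Rightarrow> 'a \<Rightarrow> 'q) \<Rightarrow> 'q \<Rightarrow> 'a list \<Rightarrow> 'q list" where
  "dfa_run \<delta> p [] = [p]"
| "dfa_run \<delta> p (a # u) = p # dfa_run \<delta> (\<delta> p a) u"

lemma Cons_eq_dfa_run_iff: "q # qs = dfa_run \<delta> p u \<longleftrightarrow> q = p \<and> qs = tl (dfa_run \<delta> p u)"
  by (cases u) auto

lemma dfa_run_not_Nil [simp]: "dfa_run \<delta> p u \<noteq> []"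
  by (cases u) simp_all

lemma hd_dfa_run [simp]: "hd (dfa_run \<delta> p u) = p"
  by (cases u) simp_all

lemma last_dfa_run [simp]: "last (dfa_run \<delta> p u) = foldl \<delta> p u"
  by (induction u arbitrary: p) simp_all

context
  fixes Q :: "'q set" and i :: 'q and F :: "'q set" and \<delta> :: "'q \<Rightarrow> 'a \<Rightarrow> 'q"
  assumes closed: "\<And>p a. p \<in> Q \<Longrightarrow> \<delta> p a \<in> Q"
begin

lemma is_path_dfa_iff: "is_path (dfa Q i F \<delta>) qs u \<longleftrightarrow> (\<exists>p\<in>Q. qs = dfa_run \<delta> p u)"
proof (induction u arbitrary: qs)
  case Nil
  then show ?case by (auto simp: is_path_Nil_iff)
next
  case (Cons a u)
  then show ?case
    by (auto simp: is_path_Cons_iff closed Cons_eq_dfa_run_iff) (metis Cons_eq_dfa_run_iff)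
qed

lemma trans_rel_dfa: "trans_rel (dfa Q i F \<delta>) u = {(p, foldl \<delta> p u) | p. p \<in> Q}"
  by (auto simp: trans_rel_def is_path_dfa_iff)

lemma nfa_lang_dfa: "i \<in> Q \<Longrightarrow> u \<in> nfa_lang (dfa Q i F \<delta>) \<longleftrightarrow> foldl \<delta> i u \<in> F"
  by (auto simp: nfa_lang_iff_trans_rel trans_rel_dfa)

lemma unambiguous_dfa: "unambiguous_nfa (dfa Q i F \<delta>)"
  by (auto simp: unambiguous_nfa_def successful_run_def is_path_dfa_iff)

lemma wf_dfa: "finite Q \<Longrightarrow> i \<in> Q \<Longrightarrow> F \<subseteq> Q \<Longrightarrow> wf_nfa (dfa Q i F \<delta>)"
  by (auto simp: wf_nfa_def closed)

end

definition subset_step :: "(nat, 'a) nfa \<Rightarrow> nat \<Rightarrow> 'a \<Rightarrow> nat" where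
  "subset_step A x a = set_encode (trans_rel A [a] `` set_decode x)"

definition subset_dfa :: "(nat, 'a) nfa \<Rightarrow> bool \<Rightarrow> (nat, 'a) nfa" where
  "subset_dfa A b = dfa (set_encode ` Pow (nfa_states A)) (set_encode (nfa_init A))
     (set_encode ` {S \<in> Pow (nfa_states A). (S \<inter> nfa_final A \<noteq> {}) = b}) (subset_step A)"

context
  fixes A :: "(nat, 'a) nfa"
  assumes wf: "wf_nfa A"
begin

lemma finite_subset_states: "S \<subseteq> nfa_states A \<Longrightarrow> finite S"
  using wf finite_subset by (auto simp: wf_nfa_def)

lemma subset_step_set_encode:
  "S \<subseteq> nfa_states A \<Longrightarrow> subset_step A (set_encode S) a = set_encode (trans_rel A [a] `` S)"
  by (simp add: subset_step_def finite_subset_states)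

lemma subset_step_closed:
  "x \<in> set_encode ` Pow (nfa_states A) \<Longrightarrow> subset_step A x a \<in> set_encode ` Pow (nfa_states A)"
  using trans_rel_subset[of A "[a]"] by (auto simp: subset_step_set_encode)

lemma foldl_subset_step:
  "S \<subseteq> nfa_states A \<Longrightarrow> foldl (subset_step A) (set_encode S) u = set_encode (trans_rel A u `` S)"
proof (induction u arbitrary: S)
  case Nil
  then show ?case by (auto simp: trans_rel_Nil intro!: arg_cong[where f = set_encode])
next
  case (Cons a u)
  have "trans_rel A [a] `` S \<subseteq> nfa_states A"
    using trans_rel_subset[of A "[a]"] by auto
  with Cons show ?case
    using trans_rel_append[of A "[a]" u] by (simp add: subset_step_set_encode relcomp_Image)
qed

lemma wf_subset_dfa: "wf_nfa (subset_dfa A b)"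
  using wf unfolding subset_dfa_def
  by (intro wf_dfa subset_step_closed) (auto simp: wf_nfa_def)

lemma unambiguous_subset_dfa: "unambiguous_nfa (subset_dfa A b)"
  unfolding subset_dfa_def by (rule unambiguous_dfa) (rule subset_step_closed)

lemma trans_rel_subset_dfa:
  "trans_rel (subset_dfa A b) u = {(set_encode S, set_encode (trans_rel A u `` S)) | S. S \<subseteq> nfa_states A}"
  unfolding subset_dfa_def
  by (subst trans_rel_dfa) (auto simp: foldl_subset_step intro: subset_step_closed)

lemma nfa_lang_subset_dfa: "u \<in> nfa_lang (subset_dfa A b) \<longleftrightarrow> (u \<in> nfa_lang A) = b"
proof -
  have init: "nfa_init A \<subseteq> nfa_states A" using wf by (simp add: wf_nfa_def)
  have reach: "trans_rel A u `` nfa_init A \<subseteq> nfa_states A"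
    using trans_rel_subset[of A u] by auto
  have "u \<in> nfa_lang (subset_dfa A b) \<longleftrightarrow>
      set_encode (trans_rel A u `` nfa_init A) \<in> set_encode ` {S \<in> Pow (nfa_states A). (S \<inter> nfa_final A \<noteq> {}) = b}"
    unfolding subset_dfa_def using init
    by (subst nfa_lang_dfa) (auto simp: foldl_subset_step intro: subset_step_closed)
  also have "\<dots> \<longleftrightarrow> (trans_rel A u `` nfa_init A \<inter> nfa_final A \<noteq> {}) = b"
    using reach by (auto simp: set_encode_eq finite_subset_states) blast+
  also have "\<dots> \<longleftrightarrow> (u \<in> nfa_lang A) = b"
    by (simp add: nfa_lang_iff_trans_rel)
  finally show ?thesis .
qed

lemma V_automaton_subset_dfa:
  assumes V: "monoid_variety V" and "V_automaton V A"
  shows "V_automaton V (subset_dfa A b)"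
proof (rule V_automaton_if_trans_rel_determined[OF V assms(2) assms(2)])
  show "finite (nfa_states (subset_dfa A b))"
    using wf_subset_dfa by (simp add: wf_nfa_def)
  fix u v assume "trans_rel A u = trans_rel A v"
  then show "trans_rel (subset_dfa A b) u = trans_rel (subset_dfa A b) v"
    by (simp add: trans_rel_subset_dfa)
qed

end

lemma underlying_simps [simp]:
  "nfa_states (underlying T) = nft_states T" "nfa_init (underlying T) = dom (nft_init T)"
  "nfa_final (underlying T) = dom (nft_final T)"
  "nfa_trans (underlying T) p a q \<longleftrightarrow> nft_delta T p a q \<noteq> None"
  by (simp_all add: underlying_def)

definition run_result :: "('q, 'a, 'g) nft \<Rightarrow> 'q list \<Rightarrow> 'a list \<Rightarrow> 'g list" where
  "run_result T qs u = the (nft_init T (hd qs)) @ run_output T qs u @ the (nft_final T (last qs))"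

lemma nft_rel_iff:
  "(u, w) \<in> nft_rel T \<longleftrightarrow> (\<exists>qs. successful_run (underlying T) qs u \<and> w = run_result T qs u)"
  by (simp add: nft_rel_def run_result_def)

lemma nfa_lang_underlying: "nfa_lang (underlying T) = Domain (nft_rel T)"
  unfolding nfa_lang_def nft_rel_def by blast

lemma wf_nftD:
  assumes "wf_nft T"
  shows "finite (nft_states T)" "nft_init T p \<noteq> None \<Longrightarrow> p \<in> nft_states T"
    "nft_final T p \<noteq> None \<Longrightarrow> p \<in> nft_states T"
    "nft_delta T p a q \<noteq> None \<Longrightarrow> p \<in> nft_states T \<and> q \<in> nft_states T"
  using assms by (auto simp: wf_nft_def wf_nfa_def)

lemma wf_nfaD:
  assumes "wf_nfa A"
  shows "finite (nfa_states A)" "p \<in> nfa_init A \<Longrightarrow> p \<in> nfa_states A"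
    "p \<in> nfa_final A \<Longrightarrow> p \<in> nfa_states A"
    "nfa_trans A p a q \<Longrightarrow> p \<in> nfa_states A \<and> q \<in> nfa_states A"
  using assms by (auto simp: wf_nfa_def)

subsection \<open>Union with an automaton\<close>

definition union_nft :: "('b \<Rightarrow> 'c) \<Rightarrow> 'c list \<Rightarrow> (nat, 'a, 'b) nft \<Rightarrow> (nat, 'a) nfa \<Rightarrow> (nat, 'a, 'c) nft" where
  "union_nft g z T D = \<lparr>nft_states = (\<lambda>q. 2 * q) ` nft_states T \<union> (\<lambda>q. Suc (2 * q)) ` nfa_states D,
     nft_init = (\<lambda>p. if even p then map_option (map g) (nft_init T (p div 2))
                     else if p div 2 \<in> nfa_init D then Some [] else None),
     nft_final = (\<lambda>p. if even p then map_option (map g) (nft_final T (p div 2))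
                     else if p div 2 \<in> nfa_final D then Some z else None),
     nft_delta = (\<lambda>p a q. if even p \<and> even q then map_option (map g) (nft_delta T (p div 2) a (q div 2))
                     else if odd p \<and> odd q \<and> nfa_trans D (p div 2) a (q div 2) then Some [] else None)\<rparr>"

lemma double_neq_Suc_double [simp]: "2 * p \<noteq> Suc (2 * q)" "Suc (2 * q) \<noteq> 2 * (p :: nat)"
  by presburger+

lemma double_mem_image_iff [simp]:
  "2 * p \<in> (\<lambda>q. 2 * q) ` S \<longleftrightarrow> p \<in> S" "2 * p \<notin> (\<lambda>q. Suc (2 * q)) ` S"
  "Suc (2 * p) \<in> (\<lambda>q. Suc (2 * q)) ` S \<longleftrightarrow> p \<in> S" "Suc (2 * p) \<notin> (\<lambda>q. 2 * q) ` S"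
  for p :: nat
  by auto

lemma union_nft_simps:
  "nft_states (union_nft g z T D) = (\<lambda>q. 2 * q) ` nft_states T \<union> (\<lambda>q. Suc (2 * q)) ` nfa_states D"
  "nft_init (union_nft g z T D) (2 * p) = map_option (map g) (nft_init T p)"
  "nft_init (union_nft g z T D) (Suc (2 * p)) = (if p \<in> nfa_init D then Some [] else None)"
  "nft_final (union_nft g z T D) (2 * p) = map_option (map g) (nft_final T p)"
  "nft_final (union_nft g z T D) (Suc (2 * p)) = (if p \<in> nfa_final D then Some z else None)"
  "nft_delta (union_nft g z T D) (2 * p) a (2 * q) = map_option (map g) (nft_delta T p a q)"
  "nft_delta (union_nft g z T D) (Suc (2 * p)) a (Suc (2 * q)) = (if nfa_trans D p a q then Some [] else None)"
  "nft_delta (union_nft g z T D) (2 * p) a (Suc (2 * q)) = None"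
  "nft_delta (union_nft g z T D) (Suc (2 * p)) a (2 * q) = None"
  by (simp_all add: union_nft_def)

lemma is_path_union_nft_double:
  "is_path (underlying T) ps u \<Longrightarrow> is_path (underlying (union_nft g z T D)) (map (\<lambda>q. 2 * q) ps) u"
  by (induction "underlying T" ps u rule: is_path.induct) (auto simp: union_nft_simps)

lemma is_path_union_nft_Suc_double:
  "is_path D ps u \<Longrightarrow> is_path (underlying (union_nft g z T D)) (map (\<lambda>q. Suc (2 * q)) ps) u"
  by (induction D ps u rule: is_path.induct) (auto simp: union_nft_simps)

lemma is_path_union_nft_cases:
  assumes "is_path (underlying (union_nft g z T D)) qs u"
  shows "(\<exists>ps. qs = map (\<lambda>q. 2 * q) ps \<and> is_path (underlying T) ps u) \<or>
    (\<exists>ps. qs = map (\<lambda>q. Suc (2 * q)) ps \<and> is_path D ps u)"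
  using assms
proof (induction u arbitrary: qs)
  case Nil
  then show ?case by (auto simp: is_path_Nil_iff union_nft_simps Cons_eq_map_conv)
next
  case (Cons a u)
  then obtain p q rs where qs: "qs = p # q # rs" "p \<in> nft_states (union_nft g z T D)"
    and pq: "nft_delta (union_nft g z T D) p a q \<noteq> None"
    and rest: "is_path (underlying (union_nft g z T D)) (q # rs) u"
    by (auto simp: is_path_Cons_iff)
  consider
      (T) q' ps where "q = 2 * q'" "rs = map (\<lambda>q. 2 * q) ps" "is_path (underlying T) (q' # ps) u"
    | (D) q' ps where "q = Suc (2 * q')" "rs = map (\<lambda>q. Suc (2 * q)) ps" "is_path D (q' # ps) u"
    using Cons.IH[OF rest] by (auto simp: Cons_eq_map_conv)
  then show ?case
  proof cases
    case T
    with qs(2) pq obtain p' where "p = 2 * p'" "p' \<in> nft_states T" "nft_delta T p' a q' \<noteq> None"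
      by (auto simp: union_nft_simps)
    with T qs(1) show ?thesis
      by (intro disjI1 exI[of _ "p' # q' # ps"]) (simp add: is_path_Cons_iff)
  next
    case D
    with qs(2) pq obtain p' where "p = Suc (2 * p')" "p' \<in> nfa_states D" "nfa_trans D p' a q'"
      by (auto simp: union_nft_simps split: if_splits)
    with D qs(1) show ?thesis
      by (intro disjI2 exI[of _ "p' # q' # ps"]) (simp add: is_path_Cons_iff)
  qed
qed

lemma is_path_union_nft_iff:
  "is_path (underlying (union_nft g z T D)) qs u \<longleftrightarrow>
     (\<exists>ps. qs = map (\<lambda>q. 2 * q) ps \<and> is_path (underlying T) ps u) \<or>
     (\<exists>ps. qs = map (\<lambda>q. Suc (2 * q)) ps \<and> is_path D ps u)"
  using is_path_union_nft_cases is_path_union_nft_double is_path_union_nft_Suc_double by blast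

lemma run_output_union_nft_double:
  "is_path (underlying T) ps u \<Longrightarrow>
     run_output (union_nft g z T D) (map (\<lambda>q. 2 * q) ps) u = map g (run_output T ps u)"
  by (induction T ps u rule: run_output.induct) (auto simp: union_nft_simps)

lemma run_output_union_nft_Suc_double:
  "is_path D ps u \<Longrightarrow> run_output (union_nft g z T D) (map (\<lambda>q. Suc (2 * q)) ps) u = []"
  by (induction D ps u rule: is_path.induct) (auto simp: union_nft_simps)

lemma map_double_eq_iff [simp]:
  "map (\<lambda>q::nat. 2 * q) ps = map (\<lambda>q. 2 * q) ps' \<longleftrightarrow> ps = ps'"
  "map (\<lambda>q::nat. Suc (2 * q)) ps = map (\<lambda>q. Suc (2 * q)) ps' \<longleftrightarrow> ps = ps'"
  "map (\<lambda>q::nat. 2 * q) ps = map (\<lambda>q. Suc (2 * q)) ps' \<longleftrightarrow> ps = [] \<and> ps' = []"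
  by (auto simp: inj_def inj_map_eq_map) (cases ps; cases ps'; simp)+

lemma successful_run_union_nft_double:
  "successful_run (underlying (union_nft g z T D)) (map (\<lambda>q. 2 * q) ps) u \<longleftrightarrow> successful_run (underlying T) ps u"
  by (auto simp: successful_run_iff_Cons is_path_union_nft_iff union_nft_simps last_map)

lemma successful_run_union_nft_Suc_double:
  "successful_run (underlying (union_nft g z T D)) (map (\<lambda>q. Suc (2 * q)) ps) u \<longleftrightarrow> successful_run D ps u"
  by (auto simp: successful_run_iff_Cons is_path_union_nft_iff union_nft_simps last_map split: if_splits)

lemma successful_run_union_nft_iff:
  "successful_run (underlying (union_nft g z T D)) qs u \<longleftrightarrow>
     (\<exists>ps. qs = map (\<lambda>q. 2 * q) ps \<and> successful_run (underlying T) ps u) \<or>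
     (\<exists>ps. qs = map (\<lambda>q. Suc (2 * q)) ps \<and> successful_run D ps u)"
proof -
  have "successful_run (underlying (union_nft g z T D)) qs u \<longleftrightarrow>
    is_path (underlying (union_nft g z T D)) qs u \<and> successful_run (underlying (union_nft g z T D)) qs u"
    by (auto simp: successful_run_def)
  then show ?thesis
    by (auto simp: is_path_union_nft_iff successful_run_union_nft_double successful_run_union_nft_Suc_double)
qed

lemma run_result_union_nft_double:
  assumes "successful_run (underlying T) ps u"
  shows "run_result (union_nft g z T D) (map (\<lambda>q. 2 * q) ps) u = map g (run_result T ps u)"
  using assms run_output_union_nft_double[of T ps u]
  by (auto simp: run_result_def successful_run_iff_Cons union_nft_simps last_map)

lemma run_result_union_nft_Suc_double:
  assumes "successful_run D ps u"
  shows "run_result (union_nft g z T D) (map (\<lambda>q. Suc (2 * q)) ps) u = z"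
  using assms run_output_union_nft_Suc_double[of D ps u]
  by (auto simp: run_result_def successful_run_iff_Cons union_nft_simps last_map)

lemma nft_rel_union_nft_iff:
  "(u, w) \<in> nft_rel (union_nft g z T D) \<longleftrightarrow>
     (\<exists>w'. (u, w') \<in> nft_rel T \<and> w = map g w') \<or> (u \<in> nfa_lang D \<and> w = z)"
  unfolding nft_rel_iff successful_run_union_nft_iff nfa_lang_def
  by (auto simp: run_result_union_nft_double run_result_union_nft_Suc_double)

lemma trans_rel_union_nft:
  "trans_rel (underlying (union_nft g z T D)) u =
     map_prod (\<lambda>q. 2 * q) (\<lambda>q. 2 * q) ` trans_rel (underlying T) u \<union>
     map_prod (\<lambda>q. Suc (2 * q)) (\<lambda>q. Suc (2 * q)) ` trans_rel D u"
proof -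
  have "{qs. is_path (underlying (union_nft g z T D)) qs u} =
    map (\<lambda>q. 2 * q) ` {ps. is_path (underlying T) ps u} \<union> map (\<lambda>q. Suc (2 * q)) ` {ps. is_path D ps u}"
    by (auto simp: is_path_union_nft_iff)
  then show ?thesis
    by (simp add: trans_rel_eq_endpoints image_Un endpoints_map_image is_path_not_Nil)
qed

lemma nat_parity_cases:
  fixes p :: nat
  obtains q where "p = 2 * q" | q where "p = Suc (2 * q)"
  by (cases "even p") (auto elim!: evenE oddE)

lemma wf_union_nft:
  assumes T: "wf_nft T" and D: "wf_nfa D"
  shows "wf_nft (union_nft g z T D)"
  unfolding wf_nft_def wf_nfa_def
proof (intro conjI subsetI allI impI)
  show "finite (nfa_states (underlying (union_nft g z T D)))"
    using wf_nftD(1)[OF T] wf_nfaD(1)[OF D] by (simp add: union_nft_simps)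
next
  fix p assume "p \<in> nfa_init (underlying (union_nft g z T D))"
  then show "p \<in> nfa_states (underlying (union_nft g z T D))"
    by (cases p rule: nat_parity_cases)
      (auto simp: union_nft_simps wf_nftD(2-4)[OF T] wf_nfaD(2-4)[OF D] split: if_splits)
next
  fix p assume "p \<in> nfa_final (underlying (union_nft g z T D))"
  then show "p \<in> nfa_states (underlying (union_nft g z T D))"
    by (cases p rule: nat_parity_cases)
      (auto simp: union_nft_simps wf_nftD(2-4)[OF T] wf_nfaD(2-4)[OF D] split: if_splits)
next
  fix p a q assume "nfa_trans (underlying (union_nft g z T D)) p a q"
  then show "p \<in> nfa_states (underlying (union_nft g z T D))" "q \<in> nfa_states (underlying (union_nft g z T D))"
    by (cases p rule: nat_parity_cases; cases q rule: nat_parity_cases;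
        auto simp: union_nft_simps wf_nftD(2-4)[OF T] wf_nfaD(2-4)[OF D] split: if_splits)+
qed

lemma unambiguous_union_nft:
  assumes "unambiguous_nft T" "unambiguous_nfa D" "Domain (nft_rel T) \<inter> nfa_lang D = {}"
  shows "unambiguous_nft (union_nft g z T D)"
proof -
  have "\<not> (successful_run (underlying T) ps u \<and> successful_run D ps' u)" for ps ps' u
    using assms(3) nfa_lang_underlying[of T] unfolding nfa_lang_def by blast
  with assms(1,2) show ?thesis
    unfolding unambiguous_nft_def unambiguous_nfa_def successful_run_union_nft_iff
    by blast
qed

lemma V_nft_union_nft:
  assumes "monoid_variety V" "V_nft V T" "V_automaton V D" "wf_nft T" "wf_nfa D"
  shows "V_nft V (union_nft g z T D)"
  unfolding V_nft_def
proof (rule V_automaton_if_trans_rel_determined[OF assms(1) assms(2)[unfolded V_nft_def] assms(3)])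
  show "finite (nfa_states (underlying (union_nft g z T D)))"
    using wf_union_nft[OF assms(4,5), of g z] by (simp add: wf_nft_def wf_nfa_def)
qed (simp add: trans_rel_union_nft)

subsection \<open>Product with an automaton\<close>

abbreviation decode_fst :: "nat \<Rightarrow> nat" where "decode_fst p \<equiv> fst (prod_decode p)"
abbreviation decode_snd :: "nat \<Rightarrow> nat" where "decode_snd p \<equiv> snd (prod_decode p)"

definition product_nft :: "('b \<Rightarrow> 'c) \<Rightarrow> (nat, 'a, 'b) nft \<Rightarrow> (nat, 'a) nfa \<Rightarrow> (nat, 'a, 'c) nft" where
  "product_nft g T D = \<lparr>nft_states = prod_encode ` (nft_states T \<times> nfa_states D),
     nft_init = (\<lambda>p. if decode_snd p \<in> nfa_init D then map_option (map g) (nft_init T (decode_fst p)) else None),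
     nft_final = (\<lambda>p. if decode_snd p \<in> nfa_final D then map_option (map g) (nft_final T (decode_fst p)) else None),
     nft_delta = (\<lambda>p a q. if nfa_trans D (decode_snd p) a (decode_snd q)
                     then map_option (map g) (nft_delta T (decode_fst p) a (decode_fst q)) else None)\<rparr>"

lemma prod_encode_image_iff: "p \<in> prod_encode ` (A \<times> B) \<longleftrightarrow> decode_fst p \<in> A \<and> decode_snd p \<in> B"
proof
  assume "decode_fst p \<in> A \<and> decode_snd p \<in> B"
  then have "prod_decode p \<in> A \<times> B" by (simp add: mem_Times_iff)
  then show "p \<in> prod_encode ` (A \<times> B)" by (rule rev_image_eqI) simp
qed auto

lemma decode_eq_iff: "p = q \<longleftrightarrow> decode_fst p = decode_fst q \<and> decode_snd p = decode_snd q"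
  by (metis prod.expand prod_decode_inverse)

lemma product_nft_simps:
  "p \<in> nft_states (product_nft g T D) \<longleftrightarrow> decode_fst p \<in> nft_states T \<and> decode_snd p \<in> nfa_states D"
  "nft_init (product_nft g T D) p =
     (if decode_snd p \<in> nfa_init D then map_option (map g) (nft_init T (decode_fst p)) else None)"
  "nft_final (product_nft g T D) p =
     (if decode_snd p \<in> nfa_final D then map_option (map g) (nft_final T (decode_fst p)) else None)"
  "nft_delta (product_nft g T D) p a q = (if nfa_trans D (decode_snd p) a (decode_snd q)
     then map_option (map g) (nft_delta T (decode_fst p) a (decode_fst q)) else None)"
  by (simp_all add: product_nft_def prod_encode_image_iff)

lemma is_path_product_nft_iff:
  "is_path (underlying (product_nft g T D)) qs u \<longleftrightarrow>
     is_path (underlying T) (map decode_fst qs) u \<and> is_path D (map decode_snd qs) u"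
proof (induction u arbitrary: qs)
  case Nil
  then show ?case by (auto simp: is_path_Nil_iff product_nft_simps)
next
  case (Cons a u)
  then show ?case
    by (cases qs rule: remdups_adj.cases) (auto simp: product_nft_simps split: if_splits)
qed

lemma successful_run_product_nft_iff:
  "successful_run (underlying (product_nft g T D)) qs u \<longleftrightarrow>
     successful_run (underlying T) (map decode_fst qs) u \<and> successful_run D (map decode_snd qs) u"
  by (cases qs)
    (auto simp: successful_run_def is_path_product_nft_iff product_nft_simps last_map split: if_splits)

lemma run_output_product_nft:
  "is_path (underlying (product_nft g T D)) qs u \<Longrightarrow>
     run_output (product_nft g T D) qs u = map g (run_output T (map decode_fst qs) u)"
proof (induction u arbitrary: qs)
  case (Cons a u)
  then show ?case
    by (cases qs rule: remdups_adj.cases)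
      (auto simp: product_nft_simps split: if_splits)
qed (auto simp: is_path_Nil_iff)

lemma run_result_product_nft:
  "successful_run (underlying (product_nft g T D)) qs u \<Longrightarrow>
     run_result (product_nft g T D) qs u = map g (run_result T (map decode_fst qs) u)"
  using run_output_product_nft[of g T D qs u]
  by (cases qs)
    (auto simp: successful_run_def run_result_def product_nft_simps last_map split: if_splits)

lemma map_decode_zip:
  "length ps = length rs \<Longrightarrow>
     map decode_fst (map prod_encode (zip ps rs)) = ps \<and> map decode_snd (map prod_encode (zip ps rs)) = rs"
  by (simp add: comp_def)

lemma map_decode_eq_imp_eq:
  "qs = qs'" if "map decode_fst qs = map decode_fst qs'" "map decode_snd qs = map decode_snd qs'"
proof -
  have "map prod_decode xs = zip (map decode_fst xs) (map decode_snd xs)" for xs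
    by (induction xs) auto
  with that have "map prod_decode qs = map prod_decode qs'" by simp
  then show ?thesis by (simp add: inj_map_eq_map inj_prod_decode)
qed

lemma nft_rel_product_nft_iff:
  "(u, w) \<in> nft_rel (product_nft g T D) \<longleftrightarrow>
     (\<exists>w'. (u, w') \<in> nft_rel T \<and> w = map g w') \<and> u \<in> nfa_lang D"
proof
  assume "(u, w) \<in> nft_rel (product_nft g T D)"
  then obtain qs where "successful_run (underlying (product_nft g T D)) qs u"
    "w = run_result (product_nft g T D) qs u" by (auto simp: nft_rel_iff)
  then show "(\<exists>w'. (u, w') \<in> nft_rel T \<and> w = map g w') \<and> u \<in> nfa_lang D"
    by (auto simp: nft_rel_iff nfa_lang_def successful_run_product_nft_iff run_result_product_nft)
next
  assume "(\<exists>w'. (u, w') \<in> nft_rel T \<and> w = map g w') \<and> u \<in> nfa_lang D"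
  then obtain ps rs where ps: "successful_run (underlying T) ps u" "w = map g (run_result T ps u)"
    and rs: "successful_run D rs u" by (auto simp: nft_rel_iff nfa_lang_def)
  then have "length ps = length rs"
    using is_path_length[of "underlying T" ps u] is_path_length[of D rs u] by (simp add: successful_run_def)
  then have "successful_run (underlying (product_nft g T D)) (map prod_encode (zip ps rs)) u \<and>
      w = run_result (product_nft g T D) (map prod_encode (zip ps rs)) u"
    using ps rs map_decode_zip[of ps rs] by (simp add: successful_run_product_nft_iff run_result_product_nft)
  then show "(u, w) \<in> nft_rel (product_nft g T D)"
    by (auto simp: nft_rel_iff)
qed

lemma trans_rel_product_nft_iff:
  "(p, q) \<in> trans_rel (underlying (product_nft g T D)) u \<longleftrightarrow>
     (decode_fst p, decode_fst q) \<in> trans_rel (underlying T) u \<and> (decode_snd p, decode_snd q) \<in> trans_rel D u"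
proof
  assume "(p, q) \<in> trans_rel (underlying (product_nft g T D)) u"
  then obtain qs where qs: "is_path (underlying (product_nft g T D)) qs u" "hd qs = p" "last qs = q"
    by (auto simp: trans_rel_def)
  moreover have "qs \<noteq> []" using qs(1) by (rule is_path_not_Nil)
  ultimately show "(decode_fst p, decode_fst q) \<in> trans_rel (underlying T) u \<and> (decode_snd p, decode_snd q) \<in> trans_rel D u"
    unfolding trans_rel_iff is_path_product_nft_iff by (auto simp: hd_map last_map)
next
  assume "(decode_fst p, decode_fst q) \<in> trans_rel (underlying T) u \<and> (decode_snd p, decode_snd q) \<in> trans_rel D u"
  then obtain ps rs where ps: "is_path (underlying T) ps u" "hd ps = decode_fst p" "last ps = decode_fst q"
    and rs: "is_path D rs u" "hd rs = decode_snd p" "last rs = decode_snd q"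
    by (auto simp: trans_rel_def)
  have "length ps = length rs"
    using is_path_length[OF ps(1)] is_path_length[OF rs(1)] by simp
  then have decode: "map decode_fst (map prod_encode (zip ps rs)) = ps" "map decode_snd (map prod_encode (zip ps rs)) = rs"
    using map_decode_zip[of ps rs] by simp_all
  moreover have "map prod_encode (zip ps rs) \<noteq> []"
    using decode(1) is_path_not_Nil[OF ps(1)] by auto
  ultimately have "hd (map prod_encode (zip ps rs)) = p" "last (map prod_encode (zip ps rs)) = q"
    using ps(2,3) rs(2,3) by (metis decode_eq_iff hd_map last_map)+
  with ps(1) rs(1) decode show "(p, q) \<in> trans_rel (underlying (product_nft g T D)) u"
    unfolding trans_rel_iff is_path_product_nft_iff by metis
qed

lemma wf_product_nft:
  assumes T: "wf_nft T" and D: "wf_nfa D"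
  shows "wf_nft (product_nft g T D)"
proof -
  have "finite (nft_states (product_nft g T D))"
    using wf_nftD(1)[OF T] wf_nfaD(1)[OF D] by (simp add: product_nft_def)
  with wf_nftD(2-4)[OF T] wf_nfaD(2-4)[OF D] show ?thesis
    by (auto simp: wf_nft_def wf_nfa_def product_nft_simps split: if_splits)
qed

lemma unambiguous_product_nft:
  assumes "unambiguous_nft T" "unambiguous_nfa D"
  shows "unambiguous_nft (product_nft g T D)"
  using assms map_decode_eq_imp_eq
  unfolding unambiguous_nft_def unambiguous_nfa_def successful_run_product_nft_iff
  by blast

lemma V_nft_product_nft:
  assumes "monoid_variety V" "V_nft V T" "V_automaton V D" "wf_nft T" "wf_nfa D"
  shows "V_nft V (product_nft g T D)"
  unfolding V_nft_def
proof (rule V_automaton_if_trans_rel_determined[OF assms(1) assms(2)[unfolded V_nft_def] assms(3)])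
  show "finite (nfa_states (underlying (product_nft g T D)))"
    using wf_product_nft[OF assms(4,5), of g] by (simp add: wf_nft_def wf_nfa_def)
qed (auto simp: trans_rel_product_nft_iff)

lemma Domain_nft_rel: "nft_defines T f \<Longrightarrow> Domain (nft_rel T) = dom f"
  by (auto simp: nft_defines_def)

lemma nft_defines_union_nft_completion:
  assumes "nft_defines T f" "\<And>u. u \<in> nfa_lang D \<longleftrightarrow> f u = None"
  shows "nft_defines (union_nft Some [None] T D) (completion f)"
  using assms unfolding nft_defines_def
  by (auto simp: nft_rel_union_nft_iff completion_def split: option.splits)

lemma nft_defines_product_nft_completion:
  assumes "nft_defines T (completion f)" "\<And>u. u \<in> nfa_lang D \<longleftrightarrow> f u \<noteq> None"
  shows "nft_defines (product_nft the T D) f"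
  using assms unfolding nft_defines_def
  by (auto simp: nft_rel_product_nft_iff completion_def comp_def split: option.splits)

theorem mainTheorem16:
  fixes V :: "nat monoid \<Rightarrow> bool"
    and f :: "'a::finite list \<Rightarrow> 'a list option"
  assumes "monoid_variety V"
    and "rational f"
    and "V_language V (dom f)"
  shows "(\<exists>T :: (nat, 'a, 'a) nft. wf_nft T \<and> unambiguous_nft T \<and> V_nft V T \<and> nft_defines T f)
     \<longleftrightarrow> (\<exists>T :: (nat, 'a, 'a option) nft. wf_nft T \<and> unambiguous_nft T \<and> V_nft V T
            \<and> nft_defines T (completion f))"
proof -
  obtain A :: "(nat, 'a) nfa" where A: "wf_nfa A" "V_automaton V A" "nfa_lang A = dom f"
    using assms(3) unfolding V_language_def by blast
  define D where "D b = subset_dfa A b" for b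
  have D: "wf_nfa (D b)" "unambiguous_nfa (D b)" "V_automaton V (D b)"
    "u \<in> nfa_lang (D b) \<longleftrightarrow> (f u \<noteq> None) = b" for b u
    unfolding D_def using A assms(1)
    by (auto simp: wf_subset_dfa unambiguous_subset_dfa V_automaton_subset_dfa nfa_lang_subset_dfa)
  show ?thesis
  proof (intro iffI; elim exE conjE)
    fix T :: "(nat, 'a, 'a) nft"
    assume T: "wf_nft T" "unambiguous_nft T" "V_nft V T" "nft_defines T f"
    then have "Domain (nft_rel T) \<inter> nfa_lang (D False) = {}"
      using D(4) by (auto simp: Domain_nft_rel)
    with T D(1-3) D(4)[where b = False] assms(1) show "\<exists>T :: (nat, 'a, 'a option) nft.
      wf_nft T \<and> unambiguous_nft T \<and> V_nft V T \<and> nft_defines T (completion f)"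
      by (intro exI[of _ "union_nft Some [None] T (D False)"])
        (simp add: wf_union_nft unambiguous_union_nft V_nft_union_nft nft_defines_union_nft_completion)
  next
    fix T :: "(nat, 'a, 'a option) nft"
    assume T: "wf_nft T" "unambiguous_nft T" "V_nft V T" "nft_defines T (completion f)"
    with D(1-3) D(4)[where b = True] assms(1) show "\<exists>T :: (nat, 'a, 'a) nft.
      wf_nft T \<and> unambiguous_nft T \<and> V_nft V T \<and> nft_defines T f"
      by (intro exI[of _ "product_nft the T (D True)"])
        (simp add: wf_product_nft unambiguous_product_nft V_nft_product_nft nft_defines_product_nft_completion)
  qed
qed

end
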